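(* Let $V,W$ be real vector spaces and let $g:V\times W\to\mathbb{R}$ be given by $$g(v,w)=\sigma(v)+2p(v,w)-\mu(w)-2f(v)+2h(w)+r,$$ where $\sigma:V\to\mathbb{R}$ and $\mu:W\to\mathbb{R}$ are positive definite quadratic forms, $p:V\times W\to\mathbb{R}$ is bilinear, $f:V\to\mathbb{R}$ and $h:W\to\mathbb{R}$ are linear, and $r\in\mathbb{R}$. Assume: (i) there exists $c\ge0$ such that $c^2\sigma(v)\mu(w)\ge|p(v,w)|^2$ for all $v\in V$, $w\in W$; (ii) $\inf_{v\in V}g(v,0)>-\infty$ and $\sup_{w\in W}g(0,w)<+\infty$. Then (a) $\inf_{v\in V}\sup_{w\in W}g(v,w)=\sup_{w\in W}\inf_{v\in V}g(v,w)$; and (b) there exists $c_1\ge0$ such that $\inf_{v\in V}g(v,w)\ge-c_1(1+\mu(w))$ for all $w\in W$ and $\sup_{w\in W}g(v,w)\le c_1(1+\sigma(v))$ for all $v\in V$.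
   Context: A quadratic form on a real vector space $V$ is a function $\sigma(v)=b(v,v)$ with $b$ symmetric bilinear; it is positive definite if $\sigma(v)>0$ for all $v\ne0$. *)

theory Defs
  imports "HOL-Analysis.Analysis"
begin

definition quadratic_form :: "('a::real_vector \<Rightarrow> real) \<Rightarrow> bool" where
  "quadratic_form q \<longleftrightarrow>
     (\<exists>b :: 'a \<Rightarrow> 'a \<Rightarrow> real. bilinear b \<and> (\<forall>x y. b x y = b y x) \<and> (\<forall>v. q v = b v v))"

definition pos_def_quadratic_form :: "('a::real_vector \<Rightarrow> real) \<Rightarrow> bool" where
  "pos_def_quadratic_form q \<longleftrightarrow> quadratic_form q \<and> (\<forall>v. v \<noteq> 0 \<longrightarrow> q v > 0)"

end

theory Submission
  imports Defs
begin

text \<open>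
  Part (b): writing g v w in terms of g (v/2) 0 and g 0 (-w), the remaining terms
  \<sigma> v / 2 + 2 p v w - 2 \<mu> w are bounded below by a multiple of -\<mu> w by hypothesis (i)
  and Young's inequality; the upper bound is the same statement for the dual game
  -g w v, in which the roles of the two players are swapped.

  Part (a): once the lower value s = sup inf g is known to be finite, pick (v0, w0)
  such that v0 minimises g(-, w0) up to \<delta> and g v0 w0 is within \<delta> of s.  Since g
  is quadratic along lines, the lower value at w0 + t (w - w0) is at least
  g v0 w0 - 2\<delta> - t^2 K \<mu> (w - w0) + t (g v0 w - g v0 w0 + \<mu> (w - w0)) with K = 2c^2 + 1.
  It is also at most s, and t = 1/K gives g v0 w \<le> g v0 w0 + 3K\<delta>, so the upper
  value exceeds s by at most O(\<delta>).
\<close>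

lemma SUP_INF_le_INF_SUP:
  fixes F :: "'a \<Rightarrow> 'b \<Rightarrow> 'c::complete_lattice"
  shows "(SUP y. INF x. F x y) \<le> (INF x. SUP y. F x y)"
  by (intro SUP_least INF_greatest) (meson INF_lower SUP_upper UNIV_I order_trans)

lemma ereal_INF_gt_MInfty_imp_bounded_below:
  assumes "(INF x. ereal (F x)) > -\<infinity>"
  obtains m where "\<And>x. m \<le> F x"
proof -
  have "(INF x. ereal (F x)) \<noteq> \<infinity>"
    using INF_lower[of undefined UNIV "\<lambda>x. ereal (F x)"] by auto
  with assms obtain m where "(INF x. ereal (F x)) = ereal m" by (cases "INF x. ereal (F x)") auto
  then show thesis by (metis INF_lower UNIV_I ereal_less_eq(3) that)
qed

lemma ereal_SUP_lt_PInfty_imp_bounded_above: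
  assumes "(SUP x. ereal (F x)) < \<infinity>"
  obtains M where "\<And>x. F x \<le> M"
proof -
  have "(INF x. ereal (- F x)) = - (SUP x. ereal (F x))"
    by (simp add: ereal_INF_uminus_eq[symmetric])
  then have "(INF x. ereal (- F x)) > -\<infinity>"
    using assms by (simp add: ereal_uminus_less_reorder)
  then obtain m where "\<And>x. m \<le> - F x"
    using ereal_INF_gt_MInfty_imp_bounded_below[of "\<lambda>x. - F x"] by blast
  then have "\<And>x. F x \<le> - m" by (simp add: le_minus_iff)
  then show thesis by (rule that)
qed

lemma pos_def_quadratic_form_nonneg:
  assumes "pos_def_quadratic_form q"
  shows "0 \<le> q x"
proof (cases "x = 0")
  case True
  from assms obtain b where "bilinear b" "\<And>x. q x = b x x"
    unfolding pos_def_quadratic_form_def quadratic_form_def by blast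
  with True show ?thesis by (simp add: bilinear_lzero)
qed (use assms in \<open>auto simp: pos_def_quadratic_form_def intro: less_imp_le\<close>)

lemma quadratic_form_add_scaleR:
  assumes "quadratic_form q"
  shows "q (x + t *\<^sub>R y) = (1 - t) * q x + t * q (x + y) + (t\<^sup>2 - t) * q y"
proof -
  from assms obtain b where "bilinear b" "\<And>x y. b x y = b y x" "\<And>x. q x = b x x"
    unfolding quadratic_form_def by blast
  then show ?thesis
    by (simp add: bilinear_ladd bilinear_radd bilinear_lmul bilinear_rmul algebra_simps power2_eq_square)
qed

lemma quadratic_form_scaleR:
  assumes "quadratic_form q"
  shows "q (t *\<^sub>R x) = t\<^sup>2 * q x"
proof -
  from assms obtain b where "bilinear b" "\<And>x. q x = b x x"
    unfolding quadratic_form_def by blast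
  then show ?thesis by (simp add: bilinear_lmul bilinear_rmul power2_eq_square)
qed

lemma young_ineq_of_square_le:
  fixes a b q c t :: real
  assumes "0 \<le> a" "0 \<le> b" "q\<^sup>2 \<le> c\<^sup>2 * a * b"
  shows "- 2 * t\<^sup>2 * c\<^sup>2 * b \<le> a / 2 + 2 * t * q"
proof -
  have "(2 * t * q)\<^sup>2 \<le> 4 * t\<^sup>2 * (c\<^sup>2 * a * b)"
    using assms(3) by (simp add: power_mult_distrib mult_left_mono)
  also have "\<dots> \<le> (a / 2 + 2 * t\<^sup>2 * c\<^sup>2 * b)\<^sup>2"
    using zero_le_power2[of "a / 2 - 2 * t\<^sup>2 * c\<^sup>2 * b"]
    by (simp add: power2_eq_square algebra_simps)
  finally have "(- (2 * t * q))\<^sup>2 \<le> (a / 2 + 2 * t\<^sup>2 * c\<^sup>2 * b)\<^sup>2"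
    by simp
  then have "- (2 * t * q) \<le> a / 2 + 2 * t\<^sup>2 * c\<^sup>2 * b"
    by (rule power2_le_imp_le) (use assms(1,2) in simp)
  then show ?thesis by linarith
qed

lemma SUP_INF_approximate_saddle:
  fixes F :: "'a \<Rightarrow> 'b \<Rightarrow> real"
  assumes lower_value: "(SUP y. INF x. ereal (F x y)) = ereal s" and "0 < \<delta>"
  obtains x0 y0 where "\<And>x. F x0 y0 - \<delta> \<le> F x y0" "s \<le> F x0 y0 + \<delta>" "F x0 y0 \<le> s + \<delta>"
proof -
  have "ereal (s - \<delta> / 2) < (SUP y. INF x. ereal (F x y))"
    using lower_value \<open>0 < \<delta>\<close> by simp
  then obtain y0 where y0: "ereal (s - \<delta> / 2) < (INF x. ereal (F x y0))"
    by (auto simp: less_SUP_iff)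
  have "(INF x. ereal (F x y0)) \<le> ereal s"
    using lower_value by (metis SUP_upper UNIV_I)
  with y0 obtain q where q: "(INF x. ereal (F x y0)) = ereal q"
    by (cases "INF x. ereal (F x y0)") auto
  then have lower: "q \<le> F x y0" for x
    by (metis INF_lower UNIV_I ereal_less_eq(3))
  have "(INF x. ereal (F x y0)) < ereal (q + \<delta> / 2)"
    using q \<open>0 < \<delta>\<close> by simp
  then obtain x0 where "F x0 y0 < q + \<delta> / 2"
    by (auto simp: INF_less_iff)
  moreover have "s - \<delta> / 2 < q" "q \<le> s"
    using y0 q \<open>(INF x. ereal (F x y0)) \<le> ereal s\<close> by auto
  ultimately show thesis
    using lower[of x0] by (intro that[of x0 y0]) (auto intro: order_trans[OF _ lower])
qed

locale quadratic_saddle =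
  fixes \<sigma> :: "'v::real_vector \<Rightarrow> real"
    and \<mu> :: "'w::real_vector \<Rightarrow> real"
    and p :: "'v \<Rightarrow> 'w \<Rightarrow> real"
    and f :: "'v \<Rightarrow> real" and h :: "'w \<Rightarrow> real" and r :: real
    and g :: "'v \<Rightarrow> 'w \<Rightarrow> real"
    and c :: real
  assumes g_eq: "\<And>v w. g v w = \<sigma> v + 2 * p v w - \<mu> w - 2 * f v + 2 * h w + r"
    and sigma: "quadratic_form \<sigma>" "\<And>v. 0 \<le> \<sigma> v"
    and mu: "quadratic_form \<mu>" "\<And>w. 0 \<le> \<mu> w"
    and p: "bilinear p"
    and f: "linear f"
    and h: "linear h"
    and c_nonneg: "0 \<le> c"
    and coupling: "\<And>v w. (p v w)\<^sup>2 \<le> c\<^sup>2 * \<sigma> v * \<mu> w"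
begin

lemma dual: "quadratic_saddle \<mu> \<sigma> (\<lambda>w v. - p v w) h f (- r) (\<lambda>w v. - g v w) c"
  using sigma mu p f h c_nonneg coupling unfolding quadratic_saddle_def
  by (simp add: g_eq bilinear_def linear_compose_neg mult_ac)

lemma g_scaleR:
  "g (a *\<^sub>R v) (b *\<^sub>R w) = a\<^sup>2 * \<sigma> v + 2 * a * b * p v w - b\<^sup>2 * \<mu> w - 2 * a * f v + 2 * b * h w + r"
  using p f h by (simp add: g_eq quadratic_form_scaleR sigma mu bilinear_lmul bilinear_rmul linear_scale)

lemma g_increment:
  "g (v + u) (w + t *\<^sub>R d) - g v w =
     2 * (g (v + (1/2) *\<^sub>R u) w - g v w) + \<sigma> u / 2 + 2 * t * p u d
     + t * (g v (w + d) - g v w + \<mu> d) - t\<^sup>2 * \<mu> d"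
proof -
  have "\<sigma> (v + (1/2) *\<^sub>R u) = \<sigma> v / 2 + \<sigma> (v + u) / 2 - \<sigma> u / 4"
    using quadratic_form_add_scaleR[OF sigma(1), of v "1/2" u] by (simp add: power2_eq_square)
  moreover have "\<mu> (w + t *\<^sub>R d) = (1 - t) * \<mu> w + t * \<mu> (w + d) + (t\<^sup>2 - t) * \<mu> d"
    by (rule quadratic_form_add_scaleR[OF mu(1)])
  ultimately show ?thesis
    using p f h
    by (simp add: g_eq bilinear_ladd bilinear_radd bilinear_lmul bilinear_rmul linear_add linear_scale
        algebra_simps power2_eq_square)
qed

lemma coupling_young: "- 2 * t\<^sup>2 * c\<^sup>2 * \<mu> w \<le> \<sigma> v / 2 + 2 * t * p v w"
  using young_ineq_of_square_le[of "\<sigma> v" "\<mu> w" "p v w" c t] sigma mu coupling by simp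

lemma lower_bound:
  assumes "\<And>v. m \<le> g v 0" "\<And>w. g 0 w \<le> M"
  shows "2 * m - M - (2 * c\<^sup>2 + 2) * \<mu> w \<le> g v w"
proof -
  have "g v w = \<sigma> v / 2 + 2 * p v w - 2 * \<mu> w + 2 * g ((1/2) *\<^sub>R v) 0 - g 0 (- w)"
    using g_scaleR[of "1/2" v 0 w] g_scaleR[of 0 v "-1" w]
    by (simp add: g_eq[of v w] power2_eq_square)
  then show ?thesis
    using assms(1)[of "(1/2) *\<^sub>R v"] assms(2)[of "- w"] coupling_young[of 1 w v] by (simp add: ring_distribs)
qed

lemma upper_bound:
  assumes "\<And>v. m \<le> g v 0" "\<And>w. g 0 w \<le> M"
  shows "g v w \<le> 2 * M - m + (2 * c\<^sup>2 + 2) * \<sigma> v"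
proof -
  interpret dual: quadratic_saddle \<mu> \<sigma> "\<lambda>w v. - p v w" h f "- r" "\<lambda>w v. - g v w" c
    by (rule dual)
  have "2 * (- M) - (- m) - (2 * c\<^sup>2 + 2) * \<sigma> v \<le> - g v w"
    by (rule dual.lower_bound) (use assms in auto)
  then show ?thesis by simp
qed

lemma bound_at_approximate_saddle:
  assumes lower_value: "\<And>w. (INF v. ereal (g v w)) \<le> ereal s"
    and almost_min: "\<And>v. g v0 w0 - \<delta> \<le> g v w0"
    and near_value: "s \<le> g v0 w0 + \<delta>"
  shows "g v0 w \<le> g v0 w0 + 3 * (2 * c\<^sup>2 + 1) * \<delta>"
proof -
  define K where "K = 2 * c\<^sup>2 + 1"
  define d where "d = w - w0"
  define \<Lambda> where "\<Lambda> = g v0 (w0 + d) - g v0 w0 + \<mu> d"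
  define L where "L = g v0 w0 - 2 * \<delta> - \<mu> d / K + \<Lambda> / K"
  have K: "1 \<le> K" by (simp add: K_def)
  have "L \<le> g v (w0 + (1 / K) *\<^sub>R d)" for v
  proof -
    have "g (v0 + (v - v0)) (w0 + (1 / K) *\<^sub>R d) - g v0 w0 =
        2 * (g (v0 + (1/2) *\<^sub>R (v - v0)) w0 - g v0 w0) + \<sigma> (v - v0) / 2
        + 2 * (1 / K) * p (v - v0) d + (1 / K) * \<Lambda> - (1 / K)\<^sup>2 * \<mu> d"
      unfolding \<Lambda>_def by (rule g_increment)
    moreover have "2 * (1 / K)\<^sup>2 * c\<^sup>2 * \<mu> d + (1 / K)\<^sup>2 * \<mu> d = (1 / K)\<^sup>2 * K * \<mu> d"
      by (simp add: K_def algebra_simps)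
    moreover have "(1 / K)\<^sup>2 * K = 1 / K"
      using K by (simp add: power2_eq_square)
    ultimately show ?thesis
      using almost_min[of "v0 + (1/2) *\<^sub>R (v - v0)"] coupling_young[of "1 / K" d "v - v0"]
      unfolding L_def by simp
  qed
  then have "ereal L \<le> (INF v. ereal (g v (w0 + (1 / K) *\<^sub>R d)))"
    by (auto intro: INF_greatest)
  also have "\<dots> \<le> ereal s" by (rule lower_value)
  finally have "\<Lambda> / K \<le> 3 * \<delta> + \<mu> d / K"
    using near_value unfolding L_def by simp
  then have "\<Lambda> \<le> 3 * \<delta> * K + \<mu> d"
    using K by (simp add: field_simps)
  then show ?thesis
    unfolding \<Lambda>_def d_def K_def by (simp add: algebra_simps)
qed

lemma INF_SUP_eq_SUP_INF:
  assumes lower_value: "(SUP w. INF v. ereal (g v w)) = ereal s"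
  shows "(INF v. SUP w. ereal (g v w)) = (SUP w. INF v. ereal (g v w))"
proof (rule antisym)
  show "(INF v. SUP w. ereal (g v w)) \<le> (SUP w. INF v. ereal (g v w))"
  proof (rule ereal_le_epsilon2)
    fix e :: real
    assume "0 < e"
    define \<delta> where "\<delta> = e / (3 * (2 * c\<^sup>2 + 1) + 1)"
    have denom: "0 < 3 * (2 * c\<^sup>2 + 1) + 1" by (simp add: add_pos_nonneg)
    then have "0 < \<delta>" using \<open>0 < e\<close> by (simp add: \<delta>_def)
    with lower_value obtain v0 w0
      where "\<And>v. g v0 w0 - \<delta> \<le> g v w0" "s \<le> g v0 w0 + \<delta>" "g v0 w0 \<le> s + \<delta>"
      using SUP_INF_approximate_saddle by blast
    moreover have "(INF v. ereal (g v w)) \<le> ereal s" for w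
      using lower_value by (metis SUP_upper UNIV_I)
    ultimately have "g v0 w \<le> s + \<delta> + 3 * (2 * c\<^sup>2 + 1) * \<delta>" for w
      using bound_at_approximate_saddle[of s v0 w0 \<delta> w] by simp
    also have "s + \<delta> + 3 * (2 * c\<^sup>2 + 1) * \<delta> = s + \<delta> * (3 * (2 * c\<^sup>2 + 1) + 1)"
      by (simp add: algebra_simps)
    also have "\<dots> = s + e"
      using denom by (simp add: \<delta>_def)
    finally have "(SUP w. ereal (g v0 w)) \<le> ereal (s + e)"
      by (auto intro: SUP_least)
    then show "(INF v. SUP w. ereal (g v w)) \<le> (SUP w. INF v. ereal (g v w)) + ereal e"
      using lower_value by (simp add: INF_lower2)
  qed
qed (rule SUP_INF_le_INF_SUP)

end

theorem theorem3p2: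
  fixes \<sigma> :: "'v::real_vector \<Rightarrow> real"
    and \<mu> :: "'w::real_vector \<Rightarrow> real"
    and p :: "'v \<Rightarrow> 'w \<Rightarrow> real"
    and f :: "'v \<Rightarrow> real" and h :: "'w \<Rightarrow> real" and r :: real
    and g :: "'v \<Rightarrow> 'w \<Rightarrow> real"
  assumes g_def: "\<And>v w. g v w = \<sigma> v + 2 * p v w - \<mu> w - 2 * f v + 2 * h w + r"
    and sigma: "pos_def_quadratic_form \<sigma>"
    and mu: "pos_def_quadratic_form \<mu>"
    and p: "bilinear p"
    and f: "linear f"
    and h: "linear h"
    and i: "\<exists>c\<ge>0. \<forall>v w. c\<^sup>2 * \<sigma> v * \<mu> w \<ge> \<bar>p v w\<bar>\<^sup>2"
    and ii1: "(INF v. ereal (g v 0)) > -\<infinity>"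
    and ii2: "(SUP w. ereal (g 0 w)) < \<infinity>"
  shows "(INF v. SUP w. ereal (g v w)) = (SUP w. INF v. ereal (g v w)) \<and>
         (\<exists>c1\<ge>0. (\<forall>w. (INF v. ereal (g v w)) \<ge> ereal (- c1 * (1 + \<mu> w))) \<and>
                 (\<forall>v. (SUP w. ereal (g v w)) \<le> ereal (c1 * (1 + \<sigma> v))))"
proof -
  obtain c where "0 \<le> c" "\<And>v w. \<bar>p v w\<bar>\<^sup>2 \<le> c\<^sup>2 * \<sigma> v * \<mu> w"
    using i by blast
  then interpret quadratic_saddle \<sigma> \<mu> p f h r g c
    using g_def sigma mu p f h
    by (simp add: quadratic_saddle_def pos_def_quadratic_form_def pos_def_quadratic_form_nonneg)
  obtain m where m: "\<And>v. m \<le> g v 0"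
    using ereal_INF_gt_MInfty_imp_bounded_below[OF ii1] by blast
  obtain M where M: "\<And>w. g 0 w \<le> M"
    using ereal_SUP_lt_PInfty_imp_bounded_above[OF ii2] by blast
  define c1 where "c1 = 2 * c\<^sup>2 + 2 + \<bar>2 * m - M\<bar> + \<bar>2 * M - m\<bar>"
  have c1: "\<bar>2 * m - M\<bar> \<le> c1" "\<bar>2 * M - m\<bar> \<le> c1"
    "(2 * c\<^sup>2 + 2) * \<mu> w \<le> c1 * \<mu> w" "(2 * c\<^sup>2 + 2) * \<sigma> v \<le> c1 * \<sigma> v" for v w
    using sigma(2) mu(2) by (auto simp: c1_def intro!: mult_right_mono)
  have lower: "- c1 * (1 + \<mu> w) \<le> g v w" and upper: "g v w \<le> c1 * (1 + \<sigma> v)" for v w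
    using lower_bound[OF m M, of w v] upper_bound[OF m M, of v w] c1(1,2) c1(3)[of w] c1(4)[of v]
    by (simp_all add: ring_distribs abs_le_iff)
  have "(SUP w. INF v. ereal (g v w)) \<le> ereal M"
    using M by (auto intro!: SUP_least INF_lower2)
  moreover have "ereal (- c1 * (1 + \<mu> 0)) \<le> (SUP w. INF v. ereal (g v w))"
    using lower by (auto intro!: SUP_upper2 INF_greatest)
  ultimately obtain s where "(SUP w. INF v. ereal (g v w)) = ereal s"
    by (cases "SUP w. INF v. ereal (g v w)") auto
  then have "(INF v. SUP w. ereal (g v w)) = (SUP w. INF v. ereal (g v w))"
    by (rule INF_SUP_eq_SUP_INF)
  moreover have "0 \<le> c1" by (simp add: c1_def)
  ultimately show ?thesis
    using lower upper by (auto intro!: exI[of _ c1] INF_greatest SUP_least)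
qed

end
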